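(* For an integer $N\geq2$ let $$L^\star(N)=\max\Big\{(N_1+1)(N_3(N_1+N_2)+3N_2+3)-5\ :\ N_1,N_3\in\mathbb{N},\ N_2\in\mathbb{N}_+,\ 2(2N_1+N_2)+N_3(N_1+1)=N\Big\}.$$ Then $\lim_{N\to\infty}\frac{N^2}{2(2L^\star(N)+1)}=\frac{23}{12}$.
   Context: $L^\star(N)$ is the largest aperture of a Kl{\o}ve array (parameters $N_1,N_2,N_3$) with $N$ sensors; since this array has a contiguous sum co-array, its number of contiguous degrees of freedom is $H=2L^\star(N)+1$ and the asymptotic redundancy is $R_\infty=\lim_{N\to\infty}N^2/(2H)$. *)

theory Defs
  imports Complex_Main
begin

definition kloeve_aperture :: "nat \<Rightarrow> nat \<Rightarrow> nat \<Rightarrow> int" where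
  "kloeve_aperture N1 N2 N3 =
     (int N1 + 1) * (int N3 * (int N1 + int N2) + 3 * int N2 + 3) - 5"

definition kloeve_params :: "nat \<Rightarrow> (nat \<times> nat \<times> nat) set" where
  "kloeve_params N = {(N1, N2, N3). N2 \<ge> 1 \<and> 2 * (2 * N1 + N2) + N3 * (N1 + 1) = N}"

definition Lstar :: "nat \<Rightarrow> int" where
  "Lstar N = Max ((\<lambda>(N1, N2, N3). kloeve_aperture N1 N2 N3) ` kloeve_params N)"

end

theory Submission
  imports Defs "HOL-Real_Asymp.Real_Asymp"
begin

text \<open>
  Write \<open>A = N\<^sub>1 + 1\<close>, \<open>B = N\<^sub>2\<close>, \<open>C = N\<^sub>3\<close>, so that \<open>N + 4 = (C + 4) A + 2 B\<close> and the
  aperture is essentially \<open>A (C A + (C + 3) B)\<close>. The sum-of-squares identity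
  \<open>48 (3 (N + 4)\<^sup>2 - 23 A (C A + (C + 3) B)) = (24 B - (11 C + 21) A)\<^sup>2 + 23 ((C - 9) A)\<^sup>2\<close>
  shows \<open>L\<^sup>\<star>(N) \<le> 3 N\<^sup>2 / 23 + O(N)\<close>, with equality forced at \<open>C = 9\<close>, \<open>B \<approx> 12 A\<close>.
  Choosing \<open>N\<^sub>3 = 9\<close> and \<open>N\<^sub>1 \<approx> N / 23\<close> attains \<open>3 N\<^sup>2 / 23 - O(1)\<close>, hence
  \<open>L\<^sup>\<star>(N) / N\<^sup>2 \<longrightarrow> 3 / 23\<close> and the redundancy tends to \<open>23 / 12\<close>.
\<close>

lemma finite_kloeve_params: "finite (kloeve_params N)"
proof (rule finite_subset)
  show "kloeve_params N \<subseteq> {..N} \<times> {..N} \<times> {..N}"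
  proof
    fix x assume "x \<in> kloeve_params N"
    then obtain a b c where "x = (a, b, c)" and "2 * (2 * a + b) + c * (a + 1) = N"
      unfolding kloeve_params_def by auto
    moreover have "c \<le> c * (a + 1)" by simp
    ultimately show "x \<in> {..N} \<times> {..N} \<times> {..N}" by auto
  qed
qed auto

lemma kloeve_params_nonempty:
  assumes "2 \<le> N"
  shows "(0, 1, N - 2) \<in> kloeve_params N"
  using assms by (simp add: kloeve_params_def)

lemma kloeve_aperture_upper_bound:
  assumes "(a, b, c) \<in> kloeve_params N"
  shows "23 * (kloeve_aperture a b c + 5) \<le> 3 * (int N + 4)\<^sup>2 + 69 * (int N + 4)"
proof -
  define A where "A = int a + 1"
  define B where "B = int b"
  define C where "C = int c"
  define M where "M = int N + 4"
  have nonneg: "A \<ge> 0" "B \<ge> 0" "C \<ge> 0" by (auto simp: A_def B_def C_def)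
  have "N = 2 * (2 * a + b) + c * (a + 1)"
    using assms by (simp add: kloeve_params_def)
  then have "int N = 2 * (2 * int a + int b) + int c * (int a + 1)"
    by (simp add: algebra_simps)
  then have M: "M = (C + 4) * A + 2 * B"
    by (simp add: M_def A_def B_def C_def algebra_simps)
  have aperture: "kloeve_aperture a b c + 5 = A * (C * A + (C + 3) * B) + A * (3 - C)"
    by (simp add: kloeve_aperture_def A_def B_def C_def algebra_simps)
  have "48 * (3 * M\<^sup>2 - 23 * (A * (C * A + (C + 3) * B)))
        = (24 * B - (11 * C + 21) * A)\<^sup>2 + 23 * ((C - 9) * A)\<^sup>2"
    unfolding M by (simp add: power2_eq_square algebra_simps)
  then have main: "23 * (A * (C * A + (C + 3) * B)) \<le> 3 * M\<^sup>2"
    by (smt (verit) zero_le_power2)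
  have "A * (3 - C) \<le> 3 * A" and "A \<le> M"
    using nonneg M by (simp_all add: algebra_simps)
  with main aperture show ?thesis by (simp add: M_def)
qed

text \<open>\<open>N\<^sub>1\<close> is \<open>\<lfloor>N / 23\<rfloor>\<close> or one more, whichever makes \<open>N - 13 N\<^sub>1 - 9\<close> even.\<close>

lemma kloeve_params_witness:
  assumes "56 \<le> N"
  obtains a b where "(a, b, 9) \<in> kloeve_params N" and "23 * a \<le> N + 23" and "N \<le> 23 * a + 22"
proof -
  define q where "q = N div 23"
  have q: "23 * q \<le> N" "N < 23 * q + 23" unfolding q_def by linarith+
  define a where "a = (if odd (q + N) then q else q + 1)"
  have a: "23 * a \<le> N + 23" "N \<le> 23 * a + 22" "odd (a + N)"
    using q by (auto simp: a_def)
  then have room: "13 * a + 11 \<le> N" using assms by linarith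
  with a(3) have "even (N - (9 + 13 * a))" by (simp add: even_diff_nat)
  then obtain b where b: "N - (9 + 13 * a) = 2 * b" by (rule evenE)
  have "1 \<le> b" using b room by linarith
  moreover have "2 * (2 * a + b) + 9 * (a + 1) = N" using b room by presburger
  ultimately have "(a, b, 9) \<in> kloeve_params N" by (simp add: kloeve_params_def)
  with a that show thesis by blast
qed

lemma kloeve_aperture_lower_bound:
  assumes "(a, b, 9) \<in> kloeve_params N" and "23 * a \<le> N + 23" and "N \<le> 23 * a + 22"
  shows "69 * (int N)\<^sup>2 - 140000 \<le> 529 * kloeve_aperture a b 9"
proof -
  define t where "t = 23 * int a - int N"
  have "N = 13 * a + 2 * b + 9"
    using assms(1) by (simp add: kloeve_params_def)
  then have "int N = 13 * int a + 2 * int b + 9"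
    by simp
  then have deviation: "529 * kloeve_aperture a b 9 - 69 * (int N)\<^sup>2
                        = 9522 * int a - 3174 * t - 29624 - 69 * t\<^sup>2"
    unfolding t_def by (simp add: kloeve_aperture_def power2_eq_square algebra_simps)
  have "\<bar>t\<bar> \<le> 23" using assms(2,3) by (simp add: t_def)
  then have "t\<^sup>2 \<le> 529" using abs_le_square_iff[of t 23] by simp
  with deviation \<open>\<bar>t\<bar> \<le> 23\<close> show ?thesis by linarith
qed

lemma Lstar_attained:
  assumes "2 \<le> N"
  obtains a b c where "(a, b, c) \<in> kloeve_params N" and "Lstar N = kloeve_aperture a b c"
proof -
  let ?S = "(\<lambda>(N1, N2, N3). kloeve_aperture N1 N2 N3) ` kloeve_params N"
  have "?S \<noteq> {}" using kloeve_params_nonempty[OF assms] by blast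
  then have "Lstar N \<in> ?S"
    unfolding Lstar_def using finite_kloeve_params by (intro Max_in) auto
  with that show thesis by auto
qed

lemma Lstar_ge:
  assumes "(a, b, c) \<in> kloeve_params N"
  shows "kloeve_aperture a b c \<le> Lstar N"
  unfolding Lstar_def using assms finite_kloeve_params by (intro Max_ge) force+

lemma Lstar_upper_bound:
  assumes "2 \<le> N"
  shows "23 * (real_of_int (Lstar N) + 5) \<le> 3 * (real N + 4)\<^sup>2 + 69 * (real N + 4)"
proof -
  obtain a b c where "(a, b, c) \<in> kloeve_params N" and "Lstar N = kloeve_aperture a b c"
    using Lstar_attained[OF assms] .
  then have "23 * (Lstar N + 5) \<le> 3 * (int N + 4)\<^sup>2 + 69 * (int N + 4)"
    using kloeve_aperture_upper_bound by simp
  then show ?thesis by (metis (mono_tags) of_int_le_iff of_int_add of_int_mult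
      of_int_numeral of_int_of_nat_eq of_int_power)
qed

lemma Lstar_lower_bound:
  assumes "56 \<le> N"
  shows "69 * (real N)\<^sup>2 - 140000 \<le> 529 * real_of_int (Lstar N)"
proof -
  obtain a b where "(a, b, 9) \<in> kloeve_params N" "23 * a \<le> N + 23" "N \<le> 23 * a + 22"
    using kloeve_params_witness[OF assms] .
  then have "69 * (int N)\<^sup>2 - 140000 \<le> 529 * Lstar N"
    using kloeve_aperture_lower_bound Lstar_ge by (meson mult_left_mono order_trans zero_le_numeral)
  then show ?thesis by (metis (mono_tags) of_int_le_iff of_int_diff of_int_mult
      of_int_numeral of_int_of_nat_eq of_int_power)
qed

lemma Lstar_asymptotic: "(\<lambda>N. real_of_int (Lstar N) / (real N)\<^sup>2) \<longlonglongrightarrow> 3 / 23"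
proof (rule tendsto_sandwich)
  show "(\<lambda>N::nat. (69 * (real N)\<^sup>2 - 140000) / 529 / (real N)\<^sup>2) \<longlonglongrightarrow> 3 / 23"
    by real_asymp
  show "(\<lambda>N::nat. ((3 * (real N + 4)\<^sup>2 + 69 * (real N + 4)) / 23 - 5) / (real N)\<^sup>2) \<longlonglongrightarrow> 3 / 23"
    by real_asymp
  show "\<forall>\<^sub>F N in sequentially. (69 * (real N)\<^sup>2 - 140000) / 529 / (real N)\<^sup>2
                              \<le> real_of_int (Lstar N) / (real N)\<^sup>2"
    using eventually_ge_at_top[of 56]
    by eventually_elim (intro divide_right_mono, use Lstar_lower_bound in \<open>auto simp: mult.commute\<close>)
  show "\<forall>\<^sub>F N in sequentially. real_of_int (Lstar N) / (real N)\<^sup>2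
                              \<le> ((3 * (real N + 4)\<^sup>2 + 69 * (real N + 4)) / 23 - 5) / (real N)\<^sup>2"
    using eventually_ge_at_top[of 2]
    by eventually_elim (intro divide_right_mono, use Lstar_upper_bound in \<open>auto simp: field_simps\<close>)
qed

theorem mainTheorem11:
  shows "(\<lambda>N::nat. (real N)^2 / (2 * (2 * real_of_int (Lstar N) + 1))) \<longlonglongrightarrow> 23 / 12"
proof -
  have "(\<lambda>N. inverse (4 * (real_of_int (Lstar N) / (real N)\<^sup>2) + 2 * inverse ((real N)\<^sup>2)))
        \<longlonglongrightarrow> inverse (4 * (3 / 23) + 2 * 0)"
    by (intro tendsto_intros Lstar_asymptotic) (real_asymp, simp)
  moreover have "\<forall>\<^sub>F N in sequentially.
      inverse (4 * (real_of_int (Lstar N) / (real N)\<^sup>2) + 2 * inverse ((real N)\<^sup>2))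
      = (real N)^2 / (2 * (2 * real_of_int (Lstar N) + 1))"
    using eventually_gt_at_top[of 0]
    by eventually_elim (simp add: field_simps)
  ultimately show ?thesis by (simp add: Lim_transform_eventually)
qed

end
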